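(* Let $z\in\overline U$ and $Z_n=(z_1,\dots,z_n)\in\overline U^{\,n}$ (with all denominators below nonzero). Then \[ |B(Z_n,z)|\le\exp\Big(-\frac{1-|z|^2}{4}\sum_{j=1}^n(1-|z_j|)\Big),\qquad |B_k(Z_n,z)|\le 2\exp\Big(-\frac{1-|z|^2}{4}\sum_{j=1}^n(1-|z_j|)\Big) \] for each $k=1,\dots,n$.
   Context: $U$ is the open unit disc. For $Z_n=(z_1,\dots,z_n)$, $B(Z_n,z)=\prod_{j=1}^n\frac{z-z_j}{1-\overline{z_j}z}$ and $B_k(Z_n,z)=\prod_{1\le j\ne k\le n}\frac{z-z_j}{1-\overline{z_j}z}$. *)

theory Defs
  imports "HOL-Analysis.Analysis"
begin

definition blaschke :: "nat \<Rightarrow> (nat \<Rightarrow> complex) \<Rightarrow> complex \<Rightarrow> complex" where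
  "blaschke n Z z = (\<Prod>j\<in>{1..n}. (z - Z j) / (1 - cnj (Z j) * z))"

definition blaschke_omit :: "nat \<Rightarrow> nat \<Rightarrow> (nat \<Rightarrow> complex) \<Rightarrow> complex \<Rightarrow> complex" where
  "blaschke_omit n k Z z = (\<Prod>j\<in>{1..n} - {k}. (z - Z j) / (1 - cnj (Z j) * z))"

end

theory Submission
  imports Defs
begin

text \<open>
  For a single factor, \<open>|1 - cnj a * z|\<^sup>2 - |z - a|\<^sup>2 = (1 - |a|\<^sup>2) (1 - |z|\<^sup>2)\<close>
  and \<open>|1 - cnj a * z| \<le> 1 + |a|\<close> give
  \<open>|(z - a) / (1 - cnj a * z)|\<^sup>2 \<le> 1 - (1 - |a|) (1 - |z|\<^sup>2) / 2\<close>, and \<open>1 + x \<le> exp x\<close>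
  turns this into the exponential bound.  Multiplying over the zeros gives the bound for
  \<open>B\<close>; omitting the \<open>k\<close>-th factor loses at most
  \<open>exp ((1 - |z|\<^sup>2) (1 - |z\<^sub>k|) / 4) \<le> exp (1/4) \<le> 2\<close>.
\<close>

lemma norm_1_minus_cnj_mult_sq_minus_norm_diff_sq:
  fixes a z :: complex
  shows "(cmod (1 - cnj a * z))\<^sup>2 - (cmod (z - a))\<^sup>2 = (1 - (cmod a)\<^sup>2) * (1 - (cmod z)\<^sup>2)"
  unfolding cmod_power2 by (simp add: algebra_simps power2_eq_square)

lemma norm_blaschke_factor_sq:
  fixes a z :: complex
  assumes "1 - cnj a * z \<noteq> 0"
  shows "(cmod ((z - a) / (1 - cnj a * z)))\<^sup>2
           = 1 - (1 - (cmod a)\<^sup>2) * (1 - (cmod z)\<^sup>2) / (cmod (1 - cnj a * z))\<^sup>2"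
  using norm_1_minus_cnj_mult_sq_minus_norm_diff_sq[of a z] assms
  by (simp add: norm_divide power_divide field_simps)

lemma norm_1_minus_cnj_mult_le:
  fixes a z :: complex
  assumes "cmod z \<le> 1"
  shows "cmod (1 - cnj a * z) \<le> 1 + cmod a"
proof -
  have "cmod (1 - cnj a * z) \<le> 1 + cmod a * cmod z"
    using norm_triangle_ineq4[of 1 "cnj a * z"] by (simp add: norm_mult)
  also have "\<dots> \<le> 1 + cmod a"
    using assms by (simp add: mult_left_le)
  finally show ?thesis .
qed

lemma norm_blaschke_factor_sq_le:
  fixes a z :: complex
  assumes z: "cmod z \<le> 1" and a: "cmod a \<le> 1" and nz: "1 - cnj a * z \<noteq> 0"
  shows "(cmod ((z - a) / (1 - cnj a * z)))\<^sup>2 \<le> 1 - (1 - cmod a) * (1 - (cmod z)\<^sup>2) / 2"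
proof -
  define t where "t = 1 - (cmod z)\<^sup>2"
  define D where "D = cmod (1 - cnj a * z)"
  have "t \<ge> 0"
    using z unfolding t_def by (simp add: abs_square_le_1)
  have "D > 0" "D \<le> 1 + cmod a"
    using nz norm_1_minus_cnj_mult_le[OF z] unfolding D_def by auto
  have "1 + cmod a > 0"
    using norm_ge_zero[of a] by linarith
  have "(1 - cmod a) / 2 \<le> (1 - cmod a) / (1 + cmod a)"
    using a \<open>1 + cmod a > 0\<close> by (intro divide_left_mono) auto
  also have "\<dots> = (1 - cmod a) * (1 + cmod a) / ((1 + cmod a) * (1 + cmod a))"
    using \<open>1 + cmod a > 0\<close> by simp
  also have "\<dots> = (1 - (cmod a)\<^sup>2) / (1 + cmod a)\<^sup>2"
    by (simp add: power2_eq_square algebra_simps)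
  also have "\<dots> \<le> (1 - (cmod a)\<^sup>2) / D\<^sup>2"
    using \<open>D > 0\<close> \<open>D \<le> 1 + cmod a\<close> a
    by (intro divide_left_mono power_mono) (auto simp: abs_square_le_1)
  finally have "(1 - cmod a) * t / 2 \<le> (1 - (cmod a)\<^sup>2) * t / D\<^sup>2"
    using \<open>t \<ge> 0\<close> by (metis mult_right_mono times_divide_eq_left mult.commute)
  then show ?thesis
    using norm_blaschke_factor_sq[OF nz] unfolding t_def D_def by linarith
qed

lemma norm_blaschke_factor_le_exp:
  fixes a z :: complex
  assumes "cmod z \<le> 1" and "cmod a \<le> 1" and "1 - cnj a * z \<noteq> 0"
  shows "cmod ((z - a) / (1 - cnj a * z)) \<le> exp (- ((1 - (cmod z)\<^sup>2) / 4) * (1 - cmod a))"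
proof (rule power2_le_imp_le)
  have "(cmod ((z - a) / (1 - cnj a * z)))\<^sup>2 \<le> 1 - (1 - cmod a) * (1 - (cmod z)\<^sup>2) / 2"
    using assms by (rule norm_blaschke_factor_sq_le)
  also have "\<dots> \<le> exp (- ((1 - cmod a) * (1 - (cmod z)\<^sup>2) / 2))"
    using exp_ge_add_one_self[of "- ((1 - cmod a) * (1 - (cmod z)\<^sup>2) / 2)"] by linarith
  also have "\<dots> = (exp (- ((1 - (cmod z)\<^sup>2) / 4) * (1 - cmod a)))\<^sup>2"
    by (simp add: power2_eq_square exp_add[symmetric])
  finally show "(cmod ((z - a) / (1 - cnj a * z)))\<^sup>2 \<le> \<dots>" .
qed simp

lemma norm_prod_blaschke_factors_le_exp:
  fixes Z :: "'a \<Rightarrow> complex" and z :: complex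
  assumes "cmod z \<le> 1"
    and "\<And>j. j \<in> S \<Longrightarrow> cmod (Z j) \<le> 1"
    and "\<And>j. j \<in> S \<Longrightarrow> 1 - cnj (Z j) * z \<noteq> 0"
  shows "cmod (\<Prod>j\<in>S. (z - Z j) / (1 - cnj (Z j) * z))
           \<le> exp (- ((1 - (cmod z)\<^sup>2) / 4) * (\<Sum>j\<in>S. 1 - cmod (Z j)))"
proof (cases "finite S")
  case True
  have "cmod (\<Prod>j\<in>S. (z - Z j) / (1 - cnj (Z j) * z))
          = (\<Prod>j\<in>S. cmod ((z - Z j) / (1 - cnj (Z j) * z)))"
    by (simp add: prod_norm)
  also have "\<dots> \<le> (\<Prod>j\<in>S. exp (- ((1 - (cmod z)\<^sup>2) / 4) * (1 - cmod (Z j))))"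
    using assms by (intro prod_mono conjI norm_blaschke_factor_le_exp) auto
  also have "\<dots> = exp (- ((1 - (cmod z)\<^sup>2) / 4) * (\<Sum>j\<in>S. 1 - cmod (Z j)))"
    using True by (simp add: exp_sum sum_distrib_left)
  finally show ?thesis .
qed simp

lemma exp_one_quarter_le_2: "exp (1 / 4 :: real) \<le> 2"
proof (rule power_le_imp_le_base)
  have "exp (1 / 4 :: real) ^ 4 = exp 1"
    by (simp flip: exp_of_nat_mult)
  also have "\<dots> \<le> 2 ^ 4"
    using exp_le by simp
  finally show "exp (1 / 4 :: real) ^ Suc 3 \<le> 2 ^ Suc 3"
    by simp
qed simp

theorem proposition2p2:
  fixes n :: nat and Z :: "nat \<Rightarrow> complex" and z :: complex
  assumes "cmod z \<le> 1"
    and "\<forall>j\<in>{1..n}. cmod (Z j) \<le> 1"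
    and "\<forall>j\<in>{1..n}. 1 - cnj (Z j) * z \<noteq> 0"
  shows "cmod (blaschke n Z z)
           \<le> exp (- ((1 - (cmod z)\<^sup>2) / 4) * (\<Sum>j=1..n. 1 - cmod (Z j))) \<and>
         (\<forall>k\<in>{1..n}. cmod (blaschke_omit n k Z z)
           \<le> 2 * exp (- ((1 - (cmod z)\<^sup>2) / 4) * (\<Sum>j=1..n. 1 - cmod (Z j))))"
proof -
  define c where "c = (1 - (cmod z)\<^sup>2) / 4"
  define E where "E = exp (- c * (\<Sum>j=1..n. 1 - cmod (Z j)))"
  have "cmod (blaschke n Z z) \<le> E"
    unfolding blaschke_def E_def c_def
    using assms by (intro norm_prod_blaschke_factors_le_exp) auto
  moreover have "cmod (blaschke_omit n k Z z) \<le> 2 * E" if k: "k \<in> {1..n}" for k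
  proof -
    have "c * (1 - cmod (Z k)) \<le> c"
      using assms k unfolding c_def by (intro mult_right_le_one_le) (auto simp: abs_square_le_1)
    also have "c \<le> 1 / 4"
      unfolding c_def by simp
    finally have "c * (1 - cmod (Z k)) \<le> 1 / 4" .
    then have "exp (c * (1 - cmod (Z k))) \<le> 2"
      using exp_one_quarter_le_2 by (meson exp_le_cancel_iff order_trans)
    have "cmod (blaschke_omit n k Z z) \<le> exp (- c * (\<Sum>j\<in>{1..n} - {k}. 1 - cmod (Z j)))"
      unfolding blaschke_omit_def c_def
      using assms by (intro norm_prod_blaschke_factors_le_exp) auto
    also have "\<dots> = exp (c * (1 - cmod (Z k))) * E"
      using k unfolding E_def by (simp add: sum.remove exp_add[symmetric] algebra_simps)
    also have "\<dots> \<le> 2 * E"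
      using \<open>exp (c * (1 - cmod (Z k))) \<le> 2\<close> unfolding E_def by (intro mult_right_mono) auto
    finally show ?thesis .
  qed
  ultimately show ?thesis
    unfolding E_def c_def by auto
qed

end
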